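(* Let $d\ge 2$ and $\overrightarrow{w}\in(0,\infty)^d$, and let $\mathbb{C}$ be the set of all $d$-dimensional copulas that are $\overrightarrow{w}$-CM. Then $\mathbb{C}$ is minimal in set concordance ordering; that is, if $C\in\mathbb{C}$ and $C^*$ is any $d$-dimensional copula with $C^*\prec C$, then $C^*\in\mathbb{C}$.
   Context: A $d$-dimensional copula $C$ is $\overrightarrow{w}$-CM if a random vector $\overrightarrow{U}=(U_1,\dots,U_d)$ with distribution function $C$ (so each $U_i$ is uniform on $[0,1]$) satisfies $P\left(\sum_{i=1}^d w_iU_i=\frac12\sum_{i=1}^d w_i\right)=1$. For distribution functions $H,H^*$ on $\mathbb{R}^d$ with the same marginals, the concordance ordering $H\prec H^*$ means $H(\overrightarrow{x})\le H^*(\overrightarrow{x})$ and $\overline{H}(\overrightarrow{x})\le\overline{H^*}(\overrightarrow{x})$ for all $\overrightarrow{x}\in\mathbb{R}^d$, where $\overline{H}(\overrightarrow{x})=P(X_1>x_1,\dots,X_d>x_d)$ is the joint survival function. A set $\mathbb{C}$ of copulas is minimal in set concordance ordering if $C\in\mathbb{C}$ and $C^*\prec C$ imply $C^*\in\mathbb{C}$ (the empty set is trivially minimal). *)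

theory Defs
  imports "HOL-Probability.Probability"
begin

text \<open>Points of R^d are functions nat => real; only coordinates i < d matter.\<close>

definition copula_law :: "nat \<Rightarrow> ((nat \<Rightarrow> real) \<Rightarrow> real) \<Rightarrow> (nat \<Rightarrow> real) measure \<Rightarrow> bool" where
  "copula_law d C M \<longleftrightarrow>
     prob_space M \<and> sets M = sets (PiM {..<d} (\<lambda>_. borel)) \<and>
     (\<forall>i<d. distr M borel (\<lambda>y. y i) = uniform_measure lborel {0..1}) \<and>
     (\<forall>x. C x = measure M {y \<in> space M. \<forall>i<d. y i \<le> x i})"

definition copula :: "nat \<Rightarrow> ((nat \<Rightarrow> real) \<Rightarrow> real) \<Rightarrow> bool" where
  "copula d C \<longleftrightarrow> (\<exists>M. copula_law d C M)"

text \<open>The law of the random vector with distribution function C (unique when it exists).\<close>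
definition copula_measure :: "nat \<Rightarrow> ((nat \<Rightarrow> real) \<Rightarrow> real) \<Rightarrow> (nat \<Rightarrow> real) measure" where
  "copula_measure d C = (SOME M. copula_law d C M)"

definition copula_surv :: "nat \<Rightarrow> ((nat \<Rightarrow> real) \<Rightarrow> real) \<Rightarrow> (nat \<Rightarrow> real) \<Rightarrow> real" where
  "copula_surv d C x = measure (copula_measure d C) {y \<in> space (copula_measure d C). \<forall>i<d. y i > x i}"

definition concordance_le :: "nat \<Rightarrow> ((nat \<Rightarrow> real) \<Rightarrow> real) \<Rightarrow> ((nat \<Rightarrow> real) \<Rightarrow> real) \<Rightarrow> bool" where
  "concordance_le d C' C \<longleftrightarrow> (\<forall>x. C' x \<le> C x) \<and> (\<forall>x. copula_surv d C' x \<le> copula_surv d C x)"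

definition w_CM :: "nat \<Rightarrow> (nat \<Rightarrow> real) \<Rightarrow> ((nat \<Rightarrow> real) \<Rightarrow> real) \<Rightarrow> bool" where
  "w_CM d w C \<longleftrightarrow>
     measure (copula_measure d C)
       {y \<in> space (copula_measure d C). (\<Sum>i<d. w i * y i) = (\<Sum>i<d. w i) / 2} = 1"

definition minimal_concordance :: "nat \<Rightarrow> (((nat \<Rightarrow> real) \<Rightarrow> real) set) \<Rightarrow> bool" where
  "minimal_concordance d S \<longleftrightarrow>
     (\<forall>C C'. C \<in> S \<longrightarrow> copula d C' \<longrightarrow> concordance_le d C' C \<longrightarrow> C' \<in> S)"

end

theory Submission
  imports Defs
begin

text \<open>For a \<open>w\<close>-CM copula the weighted deviation \<open>\<Sum>i<d. w i * (U\<^sub>i - 1/2)\<close> vanishes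
  almost surely, i.e. it has second moment zero. Expanding the square, the diagonal terms
  depend only on the uniform margins, while by Hoeffding's identity
  \<open>E[U\<^sub>i U\<^sub>j] = \<integral>\<integral>\<^sub>[\<^sub>0\<^sub>,\<^sub>1\<^sub>]\<^sub>\<^sup>2 P(U\<^sub>i > s, U\<^sub>j > t) ds dt\<close> the mixed terms can only decrease when
  the survival function decreases. So the second moment is zero, and the copula \<open>w\<close>-CM, for
  every copula below a \<open>w\<close>-CM copula in concordance order. The coordinates are clamped into
  \<open>[0,1]\<close>, which changes nothing almost surely, so that all moments are of bounded variables.\<close>

definition clamp01 :: "real \<Rightarrow> real" where
  "clamp01 a = max 0 (min 1 a)"

definition weighted_deviation :: "nat \<Rightarrow> (nat \<Rightarrow> real) \<Rightarrow> (nat \<Rightarrow> real) \<Rightarrow> real" where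
  "weighted_deviation d w y = (\<Sum>i<d. w i * (clamp01 (y i) - 1/2))"

lemma clamp01_bounds: "0 \<le> clamp01 a" "clamp01 a \<le> 1"
  by (auto simp: clamp01_def)

lemma clamp01_eq [simp]: "0 \<le> a \<Longrightarrow> a \<le> 1 \<Longrightarrow> clamp01 a = a"
  by (simp add: clamp01_def)

lemma borel_measurable_clamp01 [measurable]: "clamp01 \<in> borel_measurable borel"
  unfolding clamp01_def by measurable

lemma weighted_deviation_unit_cube:
  "(\<forall>k<d. 0 \<le> y k \<and> y k \<le> 1) \<Longrightarrow>
     weighted_deviation d w y = (\<Sum>i<d. w i * y i) - (\<Sum>i<d. w i) / 2"
  by (simp add: weighted_deviation_def sum_subtractf sum_divide_distrib algebra_simps)

lemma copula_law_copula_measure: "copula d C \<Longrightarrow> copula_law d C (copula_measure d C)"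
  unfolding copula_def copula_measure_def by (rule someI_ex)

lemma copula_law_prob_space: "copula_law d C M \<Longrightarrow> prob_space M"
  by (simp add: copula_law_def)

text \<open>Coordinates \<open>i \<ge> d\<close> are measurable too, since points of the product space are
  extensional and hence constant there.\<close>
lemma copula_law_measurable_component:
  assumes "copula_law d C M"
  shows "(\<lambda>y. y i) \<in> borel_measurable M"
proof (cases "i < d")
  case True
  have "sets M = sets (Pi\<^sub>M {..<d} (\<lambda>_. borel :: real measure))"
    using assms unfolding copula_law_def by blast
  moreover have "(\<lambda>y. y i) \<in> borel_measurable (Pi\<^sub>M {..<d} (\<lambda>_. borel :: real measure))"
    using True by (intro measurable_component_singleton) simp
  ultimately show ?thesis
    using measurable_cong_sets by blast
next
  case False
  have "space M = space (Pi\<^sub>M {..<d} (\<lambda>_. borel :: real measure))"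
    using assms unfolding copula_law_def by (metis sets_eq_imp_space_eq)
  then have "(\<lambda>y. y i) \<in> borel_measurable M \<longleftrightarrow> (\<lambda>y. undefined :: real) \<in> borel_measurable M"
    using False by (intro measurable_cong) (auto simp: space_PiM PiE_def extensional_def)
  then show ?thesis by simp
qed

lemma copula_law_AE_unit_cube:
  assumes "copula_law d C M"
  shows "AE y in M. \<forall>k<d. 0 \<le> y k \<and> y k \<le> 1"
proof -
  have "AE y in M. 0 \<le> y k \<and> y k \<le> 1" if "k < d" for k
  proof (rule AE_distrD[OF copula_law_measurable_component[OF assms]])
    have "distr M borel (\<lambda>y. y k) = uniform_measure lborel {0..1}"
      using assms that unfolding copula_law_def by blast
    moreover have "AE x in uniform_measure lborel {0..1::real}. 0 \<le> x \<and> x \<le> 1"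
      by (rule AE_uniform_measureI) auto
    ultimately show "AE x in distr M borel (\<lambda>y. y k). 0 \<le> x \<and> x \<le> 1"
      by (simp only:)
  qed
  then have "AE y in M. \<forall>k\<in>{..<d}. 0 \<le> y k \<and> y k \<le> 1"
    by (intro AE_finite_allI) auto
  then show ?thesis
    by (rule eventually_mono) blast
qed

lemma copula_law_integral_component:
  assumes M: "copula_law d C M" and M': "copula_law d C' M'" and "i < d"
    and g [measurable]: "(g :: real \<Rightarrow> real) \<in> borel_measurable borel"
  shows "(\<integral>y. g (y i) \<partial>M) = (\<integral>y. g (y i) \<partial>M')"
proof -
  have "(\<integral>y. g (y i) \<partial>M) = integral\<^sup>L (distr M borel (\<lambda>y. y i)) g"
    by (rule integral_distr[OF copula_law_measurable_component[OF M] g, symmetric])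
  also have "\<dots> = integral\<^sup>L (distr M' borel (\<lambda>y. y i)) g"
    using M M' \<open>i < d\<close> unfolding copula_law_def by simp
  also have "\<dots> = (\<integral>y. g (y i) \<partial>M')"
    by (rule integral_distr[OF copula_law_measurable_component[OF M'] g])
  finally show ?thesis .
qed

lemma w_CM_iff_AE_weighted_deviation:
  assumes "copula d C"
  shows "w_CM d w C \<longleftrightarrow> (AE y in copula_measure d C. weighted_deviation d w y = 0)"
proof -
  let ?M = "copula_measure d C"
  let ?E = "{y \<in> space ?M. (\<Sum>i<d. w i * y i) = (\<Sum>i<d. w i) / 2}"
  have law: "copula_law d C ?M"
    using assms by (rule copula_law_copula_measure)
  interpret prob_space ?M
    using law by (rule copula_law_prob_space)
  have [measurable]: "(\<lambda>y. y k) \<in> borel_measurable ?M" for k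
    using law by (rule copula_law_measurable_component)
  have "?E \<in> sets ?M" by measurable
  then have "w_CM d w C \<longleftrightarrow> (AE y in ?M. y \<in> ?E)"
    unfolding w_CM_def by (simp add: prob_eq_1)
  also have "\<dots> \<longleftrightarrow> (AE y in ?M. weighted_deviation d w y = 0)"
  proof (rule eventually_subst)
    show "AE y in ?M. y \<in> ?E \<longleftrightarrow> weighted_deviation d w y = 0"
      using AE_space copula_law_AE_unit_cube[OF law]
      by eventually_elim (simp add: weighted_deviation_unit_cube)
  qed
  finally show ?thesis .
qed

subsection \<open>Hoeffding's identity\<close>

lemma clamp01_mult_eq_nn_integral:
  "ennreal (clamp01 a * clamp01 b) =
     (\<integral>\<^sup>+ s. \<integral>\<^sup>+ t. indicator {s. 0 \<le> s \<and> s < 1 \<and> s < a} s *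
        indicator {t. 0 \<le> t \<and> t < 1 \<and> t < b} t \<partial>lborel \<partial>lborel)"
proof -
  have interval: "{s. 0 \<le> s \<and> s < 1 \<and> s < c} = {0..<clamp01 c}" for c
    by (auto simp: clamp01_def)
  have "(\<integral>\<^sup>+ s. \<integral>\<^sup>+ t. indicator {0..<clamp01 a} s * indicator {0..<clamp01 b} t \<partial>lborel \<partial>lborel)
      = (\<integral>\<^sup>+ s. ennreal (clamp01 b) * indicator {0..<clamp01 a} s \<partial>lborel)"
    by (intro nn_integral_cong) (simp add: nn_integral_cmult_indicator clamp01_bounds mult.commute)
  also have "\<dots> = ennreal (clamp01 a * clamp01 b)"
    by (simp add: nn_integral_cmult_indicator clamp01_bounds ennreal_mult mult.commute)
  finally show ?thesis
    unfolding interval ..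
qed

lemma nn_integral_clamp01_mult_eq_survival:
  fixes X Y :: "'a \<Rightarrow> real"
  assumes "sigma_finite_measure M"
    and [measurable]: "X \<in> borel_measurable M" "Y \<in> borel_measurable M"
  shows "(\<integral>\<^sup>+ x. ennreal (clamp01 (X x) * clamp01 (Y x)) \<partial>M) =
    (\<integral>\<^sup>+ s\<in>{0..<1}. \<integral>\<^sup>+ t\<in>{0..<1}. emeasure M {x \<in> space M. s < X x \<and> t < Y x} \<partial>lborel \<partial>lborel)"
proof -
  interpret sigma_finite_measure M by fact
  interpret pair_sigma_finite M lborel by unfold_locales
  define F :: "'a \<Rightarrow> real \<Rightarrow> real \<Rightarrow> ennreal" where
    "F x s t = indicator {s. 0 \<le> s \<and> s < 1 \<and> s < X x} s * indicator {t. 0 \<le> t \<and> t < 1 \<and> t < Y x} t"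
    for x s t
  have F_if: "F = (\<lambda>x s t. if 0 \<le> s \<and> s < 1 \<and> s < X x \<and> 0 \<le> t \<and> t < 1 \<and> t < Y x then 1 else 0)"
    by (auto simp: F_def fun_eq_iff)
  have F_measurable: "(\<lambda>(x, s). \<integral>\<^sup>+ t. F x s t \<partial>lborel) \<in> borel_measurable (M \<Otimes>\<^sub>M lborel)"
    "(\<lambda>(x, t). F x s t) \<in> borel_measurable (M \<Otimes>\<^sub>M lborel)" for s
    unfolding F_if by measurable
  have "(\<integral>\<^sup>+ x. ennreal (clamp01 (X x) * clamp01 (Y x)) \<partial>M) = (\<integral>\<^sup>+ x. \<integral>\<^sup>+ s. \<integral>\<^sup>+ t. F x s t \<partial>lborel \<partial>lborel \<partial>M)"
    unfolding F_def by (intro nn_integral_cong clamp01_mult_eq_nn_integral)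
  also have "\<dots> = (\<integral>\<^sup>+ s. \<integral>\<^sup>+ x. \<integral>\<^sup>+ t. F x s t \<partial>lborel \<partial>M \<partial>lborel)"
    using Fubini'[OF F_measurable(1)] by simp
  also have "\<dots> = (\<integral>\<^sup>+ s. \<integral>\<^sup>+ t. \<integral>\<^sup>+ x. F x s t \<partial>M \<partial>lborel \<partial>lborel)"
    using Fubini'[OF F_measurable(2)] by (intro nn_integral_cong) simp
  also have "\<dots> = (\<integral>\<^sup>+ s\<in>{0..<1}. \<integral>\<^sup>+ t\<in>{0..<1}. emeasure M {x \<in> space M. s < X x \<and> t < Y x} \<partial>lborel \<partial>lborel)"
  proof -
    have "(\<integral>\<^sup>+ x. F x s t \<partial>M) =
        emeasure M {x \<in> space M. s < X x \<and> t < Y x} * indicator {0..<1} t * indicator {0..<1} s" for s t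
    proof -
      let ?A = "{x \<in> space M. s < X x \<and> t < Y x}"
      have "?A \<in> sets M" by measurable
      have "(\<integral>\<^sup>+ x. F x s t \<partial>M) = (\<integral>\<^sup>+ x. (indicator {0..<1} s * indicator {0..<1} t) * indicator ?A x \<partial>M)"
        by (intro nn_integral_cong) (auto simp: F_def indicator_def)
      also have "\<dots> = emeasure M ?A * indicator {0..<1} t * indicator {0..<1} s"
        using nn_integral_cmult_indicator[OF \<open>?A \<in> sets M\<close>, of "indicator {0..<1} s * indicator {0..<1} t"]
        by (simp add: ac_simps)
      finally show ?thesis .
    qed
    then show ?thesis
      by (simp add: nn_integral_multc)
  qed
  finally show ?thesis .
qed

text \<open>Coordinates other than \<open>i\<close> and \<open>j\<close> are set to \<open>-1\<close>, which the (almost surely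
  nonnegative) components exceed anyway.\<close>
lemma emeasure_copula_measure_upper_quadrant:
  assumes "copula d C" "i < d" "j < d" "i \<noteq> j" "0 \<le> s" "0 \<le> t"
  shows "emeasure (copula_measure d C) {y \<in> space (copula_measure d C). s < y i \<and> t < y j} =
    ennreal (copula_surv d C (\<lambda>k. if k = i then s else if k = j then t else -1))"
proof -
  let ?M = "copula_measure d C"
  let ?x = "\<lambda>k. if k = i then s else if k = j then t else -1 :: real"
  have law: "copula_law d C ?M"
    using assms(1) by (rule copula_law_copula_measure)
  interpret prob_space ?M
    using law by (rule copula_law_prob_space)
  have [measurable]: "(\<lambda>y. y k) \<in> borel_measurable ?M" for k
    using law by (rule copula_law_measurable_component)
  have "emeasure ?M {y \<in> space ?M. s < y i \<and> t < y j} = emeasure ?M {y \<in> space ?M. \<forall>k<d. ?x k < y k}"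
  proof (rule emeasure_Collect_eq_AE)
    show "AE y in ?M. (s < y i \<and> t < y j) \<longleftrightarrow> (\<forall>k<d. ?x k < y k)"
      using copula_law_AE_unit_cube[OF law]
    proof eventually_elim
      case (elim y)
      then show ?case
        using assms(2-) by force
    qed
  qed measurable
  then show ?thesis
    unfolding copula_surv_def by (simp add: emeasure_eq_measure)
qed

lemma concordance_le_integral_clamp01_mult:
  assumes C: "copula d C" and C': "copula d C'" and le: "concordance_le d C' C"
    and ij: "i < d" "j < d" "i \<noteq> j"
  shows "(\<integral>y. clamp01 (y i) * clamp01 (y j) \<partial>copula_measure d C') \<le>
    (\<integral>y. clamp01 (y i) * clamp01 (y j) \<partial>copula_measure d C)"
proof -
  have moment_eq: "ennreal (\<integral>y. clamp01 (y i) * clamp01 (y j) \<partial>copula_measure d D) =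
      (\<integral>\<^sup>+ s\<in>{0..<1}. \<integral>\<^sup>+ t\<in>{0..<1}. ennreal (copula_surv d D (\<lambda>k. if k = i then s else if k = j then t else -1)) \<partial>lborel \<partial>lborel)"
    if D: "copula d D" for D
  proof -
    let ?M = "copula_measure d D"
    have law: "copula_law d D ?M"
      using D by (rule copula_law_copula_measure)
    interpret prob_space ?M
      using law by (rule copula_law_prob_space)
    have [measurable]: "(\<lambda>y. y k) \<in> borel_measurable ?M" for k
      using law by (rule copula_law_measurable_component)
    have "integrable ?M (\<lambda>y. clamp01 (y i) * clamp01 (y j))"
      by (intro integrable_const_bound[where B=1]) (auto simp: clamp01_bounds abs_mult intro!: mult_le_one)
    then have "ennreal (\<integral>y. clamp01 (y i) * clamp01 (y j) \<partial>?M) = (\<integral>\<^sup>+ y. ennreal (clamp01 (y i) * clamp01 (y j)) \<partial>?M)"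
      by (intro nn_integral_eq_integral[symmetric]) (auto simp: clamp01_bounds)
    also have "\<dots> = (\<integral>\<^sup>+ s\<in>{0..<1}. \<integral>\<^sup>+ t\<in>{0..<1}. emeasure ?M {y \<in> space ?M. s < y i \<and> t < y j} \<partial>lborel \<partial>lborel)"
      by (intro nn_integral_clamp01_mult_eq_survival) (auto intro: sigma_finite_measure_axioms)
    also have "\<dots> = (\<integral>\<^sup>+ s\<in>{0..<1}. \<integral>\<^sup>+ t\<in>{0..<1}. ennreal (copula_surv d D (\<lambda>k. if k = i then s else if k = j then t else -1)) \<partial>lborel \<partial>lborel)"
      using emeasure_copula_measure_upper_quadrant[OF D ij]
      by (auto intro!: nn_integral_cong simp: indicator_def)
    finally show ?thesis .
  qed
  have "ennreal (\<integral>y. clamp01 (y i) * clamp01 (y j) \<partial>copula_measure d C') \<le>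
      ennreal (\<integral>y. clamp01 (y i) * clamp01 (y j) \<partial>copula_measure d C)"
    unfolding moment_eq[OF C] moment_eq[OF C']
    using le unfolding concordance_le_def
    by (intro nn_integral_mono mult_right_mono ennreal_leI) auto
  then show ?thesis
    by (subst (asm) ennreal_le_iff) (auto intro!: integral_nonneg simp: clamp01_bounds)
qed

lemma (in prob_space) integral_clamp01_centred_mult:
  fixes X Y :: "'a \<Rightarrow> real"
  assumes [measurable]: "X \<in> borel_measurable M" "Y \<in> borel_measurable M"
  shows "(\<integral>x. (clamp01 (X x) - 1/2) * (clamp01 (Y x) - 1/2) \<partial>M) =
    (\<integral>x. clamp01 (X x) * clamp01 (Y x) \<partial>M) - (\<integral>x. clamp01 (X x) \<partial>M) / 2 - (\<integral>x. clamp01 (Y x) \<partial>M) / 2 + 1/4"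
proof -
  have integrable_clamp01: "integrable M (\<lambda>x. clamp01 (Z x))" if [measurable]: "Z \<in> borel_measurable M" for Z
    by (intro integrable_const_bound[where B=1]) (auto simp: clamp01_def)
  have "integrable M (\<lambda>x. clamp01 (X x) * clamp01 (Y x))"
    by (intro integrable_const_bound[where B=1]) (auto simp: clamp01_bounds abs_mult intro!: mult_le_one)
  then have "(\<integral>x. clamp01 (X x) * clamp01 (Y x) - clamp01 (X x) / 2 - clamp01 (Y x) / 2 + 1/4 \<partial>M) =
      (\<integral>x. clamp01 (X x) * clamp01 (Y x) \<partial>M) - (\<integral>x. clamp01 (X x) \<partial>M) / 2 - (\<integral>x. clamp01 (Y x) \<partial>M) / 2 + 1/4"
    using integrable_clamp01[of X] integrable_clamp01[of Y] by (simp add: prob_space)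
  then show ?thesis
    by (simp add: algebra_simps)
qed

lemma concordance_le_integral_clamp01_centred_mult:
  assumes C: "copula d C" and C': "copula d C'" and le: "concordance_le d C' C"
    and ij: "i < d" "j < d"
  shows "(\<integral>y. (clamp01 (y i) - 1/2) * (clamp01 (y j) - 1/2) \<partial>copula_measure d C') \<le>
    (\<integral>y. (clamp01 (y i) - 1/2) * (clamp01 (y j) - 1/2) \<partial>copula_measure d C)"
proof -
  let ?M = "copula_measure d C" and ?M' = "copula_measure d C'"
  have law: "copula_law d C ?M" "copula_law d C' ?M'"
    using C C' by (auto intro: copula_law_copula_measure)
  interpret M: prob_space ?M
    using law(1) by (rule copula_law_prob_space)
  interpret M': prob_space ?M'
    using law(2) by (rule copula_law_prob_space)
  have margin: "(\<integral>y. g (y k) \<partial>?M') = (\<integral>y. g (y k) \<partial>?M)"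
    if "k < d" "g \<in> borel_measurable borel" for g :: "real \<Rightarrow> real" and k
    using copula_law_integral_component[OF law(2,1) that] .
  show ?thesis
  proof (cases "i = j")
    case True
    then show ?thesis
      using margin[OF ij(2), of "\<lambda>a. (clamp01 a - 1/2) * (clamp01 a - 1/2)"] by simp
  next
    case False
    show ?thesis
      using concordance_le_integral_clamp01_mult[OF C C' le ij False]
        margin[OF ij(1), of clamp01] margin[OF ij(2), of clamp01]
      by (simp add: M.integral_clamp01_centred_mult M'.integral_clamp01_centred_mult
          copula_law_measurable_component[OF law(1)] copula_law_measurable_component[OF law(2)])
  qed
qed

lemma weighted_deviation_square:
  "(weighted_deviation d w y)\<^sup>2 =
    (\<Sum>i<d. \<Sum>j<d. w i * w j * ((clamp01 (y i) - 1/2) * (clamp01 (y j) - 1/2)))"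
  unfolding weighted_deviation_def power2_eq_square sum_product
  by (intro sum.cong refl) (simp add: algebra_simps)

lemma (in prob_space) integrable_clamp01_centred_mult:
  assumes [measurable]: "X \<in> borel_measurable M" "Y \<in> borel_measurable M"
  shows "integrable M (\<lambda>x. (clamp01 (X x) - 1/2) * (clamp01 (Y x) - 1/2))"
  by (intro integrable_const_bound[where B=1]) (auto simp: abs_mult clamp01_def intro!: mult_le_one)

lemma integrable_weighted_deviation_square:
  assumes "prob_space M" "\<And>k. (\<lambda>y. y k) \<in> borel_measurable M"
  shows "integrable M (\<lambda>y. (weighted_deviation d w y)\<^sup>2)"
  unfolding weighted_deviation_square
  using assms by (simp add: prob_space.integrable_clamp01_centred_mult)

lemma integral_weighted_deviation_square:
  assumes "prob_space M" "\<And>k. (\<lambda>y. y k) \<in> borel_measurable M"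
  shows "(\<integral>y. (weighted_deviation d w y)\<^sup>2 \<partial>M) =
    (\<Sum>i<d. \<Sum>j<d. w i * w j * (\<integral>y. (clamp01 (y i) - 1/2) * (clamp01 (y j) - 1/2) \<partial>M))"
  unfolding weighted_deviation_square using assms
  by (simp add: prob_space.integrable_clamp01_centred_mult integrable_sum Bochner_Integration.integral_sum)

lemma concordance_le_integral_weighted_deviation_square:
  assumes C: "copula d C" and C': "copula d C'" and le: "concordance_le d C' C"
    and w: "\<forall>i<d. 0 \<le> w i"
  shows "(\<integral>y. (weighted_deviation d w y)\<^sup>2 \<partial>copula_measure d C') \<le>
    (\<integral>y. (weighted_deviation d w y)\<^sup>2 \<partial>copula_measure d C)"
proof -
  have law: "copula_law d C (copula_measure d C)" "copula_law d C' (copula_measure d C')"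
    using C C' by (auto intro: copula_law_copula_measure)
  interpret M: prob_space "copula_measure d C"
    using law(1) by (rule copula_law_prob_space)
  interpret M': prob_space "copula_measure d C'"
    using law(2) by (rule copula_law_prob_space)
  show ?thesis
    using concordance_le_integral_clamp01_centred_mult[OF C C' le] w
    by (simp add: integral_weighted_deviation_square M.prob_space_axioms M'.prob_space_axioms
        copula_law_measurable_component[OF law(1)] copula_law_measurable_component[OF law(2)])
      (intro sum_mono mult_left_mono; simp)
qed

lemma w_CM_iff_integral_weighted_deviation_square:
  assumes "copula d C"
  shows "w_CM d w C \<longleftrightarrow> (\<integral>y. (weighted_deviation d w y)\<^sup>2 \<partial>copula_measure d C) = 0"
proof -
  have law: "copula_law d C (copula_measure d C)"
    using assms by (rule copula_law_copula_measure)
  interpret prob_space "copula_measure d C"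
    using law by (rule copula_law_prob_space)
  have "(\<integral>y. (weighted_deviation d w y)\<^sup>2 \<partial>copula_measure d C) = 0 \<longleftrightarrow>
      (AE y in copula_measure d C. (weighted_deviation d w y)\<^sup>2 = 0)"
    using copula_law_measurable_component[OF law]
    by (intro integral_nonneg_eq_0_iff_AE integrable_weighted_deviation_square prob_space_axioms) auto
  then show ?thesis
    by (simp add: w_CM_iff_AE_weighted_deviation[OF assms])
qed

theorem mainTheorem3:
  fixes d :: nat and w :: "nat \<Rightarrow> real"
  assumes "d \<ge> 2" and "\<forall>i<d. w i > 0"
  shows "minimal_concordance d {C. copula d C \<and> w_CM d w C}"
  unfolding minimal_concordance_def
proof (intro allI impI)
  fix C C'
  assume "C \<in> {C. copula d C \<and> w_CM d w C}" and C': "copula d C'" and le: "concordance_le d C' C"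
  then have C: "copula d C" and "w_CM d w C" by auto
  then have "(\<integral>y. (weighted_deviation d w y)\<^sup>2 \<partial>copula_measure d C) = 0"
    by (simp add: w_CM_iff_integral_weighted_deviation_square)
  moreover have "(\<integral>y. (weighted_deviation d w y)\<^sup>2 \<partial>copula_measure d C') \<le>
      (\<integral>y. (weighted_deviation d w y)\<^sup>2 \<partial>copula_measure d C)"
    using assms(2) by (intro concordance_le_integral_weighted_deviation_square[OF C C' le]) auto
  moreover have "0 \<le> (\<integral>y. (weighted_deviation d w y)\<^sup>2 \<partial>copula_measure d C')"
    by simp
  ultimately have "w_CM d w C'"
    using w_CM_iff_integral_weighted_deviation_square[OF C'] by simp
  with C' show "C' \<in> {C. copula d C \<and> w_CM d w C}"
    by simp
qed

end
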